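(* Let $\alpha,\beta\in\mathbb{R}$ with $\alpha\neq 0$, and let $G_1$ be the connected, simply connected Lie group whose Lie algebra $\mathfrak{g}_1$ has a basis $\{e_1,e_2,e_3\}$ with $[e_1,e_2]=\alpha e_1-\beta e_3$, $[e_1,e_3]=-\alpha e_1-\beta e_2$, $[e_2,e_3]=\beta e_1+\alpha e_2+\alpha e_3$, equipped with the left-invariant Lorentzian metric $g$ for which $\{e_1,e_2,e_3\}$ is pseudo-orthonormal with $e_3$ timelike, and with the product structure $J$. Let $\lambda_0,c\in\mathbb{R}$. Then there exists a derivation $D$ of $\mathfrak{g}_1$ with $\widetilde{\mathrm{Ric}}^1=(s^1\lambda_0+c)\mathrm{Id}+D$ (i.e. $(G_1,g,J)$ is an algebraic Schouten soliton associated to the Kobayashi–Nomizu connection $\nabla^1$) if and only if $\beta=0$ and $c=-\frac12\alpha^2+2\alpha^2\lambda_0$.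
   Context: Pseudo-orthonormal means $g(e_1,e_1)=g(e_2,e_2)=1$, $g(e_3,e_3)=-1$, $g(e_i,e_j)=0$ for $i\neq j$; left-invariant tensors are identified with their values on $\mathfrak{g}$. $\nabla$ is the Levi-Civita connection of $g$. The product structure $J$ is the left-invariant endomorphism with $Je_1=e_1$, $Je_2=e_2$, $Je_3=-e_3$. The canonical connection is $\nabla^0_XY=\nabla_XY-\frac12(\nabla_XJ)JY$, and the Kobayashi–Nomizu connection is $\nabla^1_XY=\nabla^0_XY-\frac14[(\nabla_YJ)JX-(\nabla_{JY}J)X]$. For $k=0,1$: $R^k(X,Y)Z=\nabla^k_X\nabla^k_YZ-\nabla^k_Y\nabla^k_XZ-\nabla^k_{[X,Y]}Z$; $\rho^k(X,Y)=-g(R^k(X,e_1)Y,e_1)-g(R^k(X,e_2)Y,e_2)+g(R^k(X,e_3)Y,e_3)$; $\widetilde\rho^k(X,Y)=\frac12(\rho^k(X,Y)+\rho^k(Y,X))$; $\widetilde{\mathrm{Ric}}^k$ is defined by $\widetilde\rho^k(X,Y)=g(\widetilde{\mathrm{Ric}}^k(X),Y)$; and $s^k=\widetilde\rho^k(e_1,e_1)+\widetilde\rho^k(e_2,e_2)-\widetilde\rho^k(e_3,e_3)$. A derivation of $\mathfrak{g}$ is a linear map $D$ with $D[X,Y]=[DX,Y]+[X,DY]$. $(G,g,J)$ is an algebraic Schouten soliton associated to $\nabla^k$ (with real constants $\lambda_0,c$) if $\widetilde{\mathrm{Ric}}^k=(s^k\lambda_0+c)\mathrm{Id}+D$ for some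 derivation $D$. *)

theory Defs
  imports "HOL-Analysis.Analysis"
begin

text \<open>The Lie algebra is modelled as real^3 with basis e1, e2, e3 (the standard
axis vectors, indexed by 1, 2, 3 of the numeral type 3). Left-invariant tensors are
identified with their values on the Lie algebra.\<close>

definition e1 :: "real^3" where "e1 = axis 1 1"
definition e2 :: "real^3" where "e2 = axis 2 1"
definition e3 :: "real^3" where "e3 = axis 3 1"

text \<open>Lie bracket of g_1, extended bilinearly and skew-symmetrically from
[e1,e2] = a e1 - b e3, [e1,e3] = -a e1 - b e2, [e2,e3] = b e1 + a e2 + a e3.\<close>
definition br1 :: "real \<Rightarrow> real \<Rightarrow> real^3 \<Rightarrow> real^3 \<Rightarrow> real^3" where
  "br1 a b x y =
     (x$1 * y$2 - x$2 * y$1) *\<^sub>R (a *\<^sub>R e1 - b *\<^sub>R e3)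
   + (x$1 * y$3 - x$3 * y$1) *\<^sub>R ((- a) *\<^sub>R e1 - b *\<^sub>R e2)
   + (x$2 * y$3 - x$3 * y$2) *\<^sub>R (b *\<^sub>R e1 + a *\<^sub>R e2 + a *\<^sub>R e3)"

definition gL :: "real^3 \<Rightarrow> real^3 \<Rightarrow> real" where
  "gL x y = x$1 * y$1 + x$2 * y$2 - x$3 * y$3"

definition Jp :: "real^3 \<Rightarrow> real^3" where
  "Jp x = x - (2 * x$3) *\<^sub>R e3"

text \<open>Levi-Civita connection of the left-invariant metric (Koszul formula):
2 g(nabla_X Y, Z) = g([X,Y],Z) - g([Y,Z],X) + g([Z,X],Y).\<close>
definition LC :: "(real^3 \<Rightarrow> real^3 \<Rightarrow> real^3) \<Rightarrow> real^3 \<Rightarrow> real^3 \<Rightarrow> real^3" where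
  "LC br X Y = (\<Sum>k\<in>UNIV. (gL (axis k 1) (axis k 1) / 2 *
      (gL (br X Y) (axis k 1) - gL (br Y (axis k 1)) X + gL (br (axis k 1) X) Y))
        *\<^sub>R axis k 1)"

definition nablaJ :: "(real^3 \<Rightarrow> real^3 \<Rightarrow> real^3) \<Rightarrow> real^3 \<Rightarrow> real^3 \<Rightarrow> real^3" where
  "nablaJ br X Y = LC br X (Jp Y) - Jp (LC br X Y)"

definition conn0 :: "(real^3 \<Rightarrow> real^3 \<Rightarrow> real^3) \<Rightarrow> real^3 \<Rightarrow> real^3 \<Rightarrow> real^3" where
  "conn0 br X Y = LC br X Y - (1/2) *\<^sub>R nablaJ br X (Jp Y)"

definition conn1 :: "(real^3 \<Rightarrow> real^3 \<Rightarrow> real^3) \<Rightarrow> real^3 \<Rightarrow> real^3 \<Rightarrow> real^3" where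
  "conn1 br X Y = conn0 br X Y
     - (1/4) *\<^sub>R (nablaJ br Y (Jp X) - nablaJ br (Jp Y) X)"

definition curv :: "(real^3 \<Rightarrow> real^3 \<Rightarrow> real^3) \<Rightarrow> (real^3 \<Rightarrow> real^3 \<Rightarrow> real^3)
    \<Rightarrow> real^3 \<Rightarrow> real^3 \<Rightarrow> real^3 \<Rightarrow> real^3" where
  "curv br nab X Y Z = nab X (nab Y Z) - nab Y (nab X Z) - nab (br X Y) Z"

definition ricci :: "(real^3 \<Rightarrow> real^3 \<Rightarrow> real^3) \<Rightarrow> (real^3 \<Rightarrow> real^3 \<Rightarrow> real^3)
    \<Rightarrow> real^3 \<Rightarrow> real^3 \<Rightarrow> real" where
  "ricci br nab X Y = - gL (curv br nab X e1 Y) e1 - gL (curv br nab X e2 Y) e2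
                      + gL (curv br nab X e3 Y) e3"

definition sym_ricci :: "(real^3 \<Rightarrow> real^3 \<Rightarrow> real^3) \<Rightarrow> (real^3 \<Rightarrow> real^3 \<Rightarrow> real^3)
    \<Rightarrow> real^3 \<Rightarrow> real^3 \<Rightarrow> real" where
  "sym_ricci br nab X Y = (ricci br nab X Y + ricci br nab Y X) / 2"

text \<open>The Ricci operator: the unique endomorphism with
g(Ric X, Y) = sym_ricci(X,Y) (g is nondegenerate).\<close>
definition ricci_op :: "(real^3 \<Rightarrow> real^3 \<Rightarrow> real^3) \<Rightarrow> (real^3 \<Rightarrow> real^3 \<Rightarrow> real^3)
    \<Rightarrow> real^3 \<Rightarrow> real^3" where
  "ricci_op br nab X = (THE R. \<forall>Y. gL R Y = sym_ricci br nab X Y)"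

definition scal :: "(real^3 \<Rightarrow> real^3 \<Rightarrow> real^3) \<Rightarrow> (real^3 \<Rightarrow> real^3 \<Rightarrow> real^3) \<Rightarrow> real" where
  "scal br nab = sym_ricci br nab e1 e1 + sym_ricci br nab e2 e2 - sym_ricci br nab e3 e3"

definition is_derivation :: "(real^3 \<Rightarrow> real^3 \<Rightarrow> real^3) \<Rightarrow> (real^3 \<Rightarrow> real^3) \<Rightarrow> bool" where
  "is_derivation br D \<longleftrightarrow> linear D \<and> (\<forall>X Y. D (br X Y) = br (D X) Y + br X (D Y))"

definition alg_schouten_soliton ::
  "(real^3 \<Rightarrow> real^3 \<Rightarrow> real^3) \<Rightarrow> (real^3 \<Rightarrow> real^3 \<Rightarrow> real^3) \<Rightarrow> real \<Rightarrow> real \<Rightarrow> bool" where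
  "alg_schouten_soliton br nab lam0 c \<longleftrightarrow>
     (\<exists>D. is_derivation br D \<and>
          (\<forall>X. ricci_op br nab X = (scal br nab * lam0 + c) *\<^sub>R X + D X))"

end

theory Submission imports Defs begin

text \<open>Everything is left-invariant, so the statement reduces to linear algebra on
\<open>\<real>\<^sup>3\<close>. Computing the Koszul formula and then the Kobayashi--Nomizu connection in
coordinates, its symmetrised Ricci tensor has an explicit Ricci operator with scalar curvature
\<open>-2(\<alpha>\<^sup>2 + \<beta>\<^sup>2)\<close>. The soliton condition says that \<open>Ric - k Id\<close> with
\<open>k = s \<lambda>\<^sub>0 + c\<close> is a derivation. Testing the derivation rule on \<open>[e\<^sub>1, e\<^sub>2]\<close> forces
\<open>\<alpha>\<^sup>2\<beta> = 0\<close> and then \<open>k = -\<alpha>\<^sup>2/2\<close>; conversely, for \<open>\<beta> = 0\<close> and this \<open>k\<close> the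
derivation rule holds identically.\<close>

lemma axis_3_components [simp]:
  "axis (1::3) (1::real) $ 1 = 1" "axis (1::3) (1::real) $ 2 = 0" "axis (1::3) (1::real) $ 3 = 0"
  "axis (2::3) (1::real) $ 1 = 0" "axis (2::3) (1::real) $ 2 = 1" "axis (2::3) (1::real) $ 3 = 0"
  "axis (3::3) (1::real) $ 1 = 0" "axis (3::3) (1::real) $ 2 = 0" "axis (3::3) (1::real) $ 3 = 1"
  by (simp_all add: axis_def)

lemma basis_components [simp]:
  "e1 $ 1 = 1" "e1 $ 2 = 0" "e1 $ 3 = 0"
  "e2 $ 1 = 0" "e2 $ 2 = 1" "e2 $ 3 = 0"
  "e3 $ 1 = 0" "e3 $ 2 = 0" "e3 $ 3 = 1"
  by (simp_all add: e1_def e2_def e3_def)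

lemma br1_components:
  "br1 a b X Y $ 1 = a * (X$1 * Y$2 - X$2 * Y$1) - a * (X$1 * Y$3 - X$3 * Y$1)
                     + b * (X$2 * Y$3 - X$3 * Y$2)"
  "br1 a b X Y $ 2 = - b * (X$1 * Y$3 - X$3 * Y$1) + a * (X$2 * Y$3 - X$3 * Y$2)"
  "br1 a b X Y $ 3 = - b * (X$1 * Y$2 - X$2 * Y$1) + a * (X$2 * Y$3 - X$3 * Y$2)"
  by (simp_all add: br1_def algebra_simps)

lemma Jp_components: "Jp X $ 1 = X$1" "Jp X $ 2 = X$2" "Jp X $ 3 = - X$3"
  by (simp_all add: Jp_def)

lemma gL_basis: "gL X e1 = X$1" "gL X e2 = X$2" "gL X e3 = - X$3"
  by (simp_all add: gL_def)

lemma LC_components: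
  "LC br X Y $ i =
       (gL (br X Y) e1 - gL (br Y e1) X + gL (br e1 X) Y) / 2 * e1 $ i
     + (gL (br X Y) e2 - gL (br Y e2) X + gL (br e2 X) Y) / 2 * e2 $ i
     - (gL (br X Y) e3 - gL (br Y e3) X + gL (br e3 X) Y) / 2 * e3 $ i"
  unfolding LC_def sum_component sum_3 by (simp add: gL_def e1_def e2_def e3_def)

lemma conn1_br1_components:
  "conn1 (br1 a b) X Y $ 1 = a * X$1 * Y$2 + a * X$3 * Y$1 - b * X$3 * Y$2"
  "conn1 (br1 a b) X Y $ 2 = - a * X$1 * Y$1 + b * X$3 * Y$1 - a * X$3 * Y$2"
  "conn1 (br1 a b) X Y $ 3 = a * X$2 * Y$3"
  by (simp_all add: conn1_def conn0_def nablaJ_def LC_components Jp_components gL_def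
      br1_components field_simps)

lemma sym_ricci_conn1_br1:
  "sym_ricci (br1 a b) (conn1 (br1 a b)) X Y =
     - (a\<^sup>2 + b\<^sup>2) * (X$1 * Y$1 + X$2 * Y$2) + a * b * (X$1 * Y$2 + X$2 * Y$1)
     - a * b / 2 * (X$1 * Y$3 + X$3 * Y$1) + a\<^sup>2 / 2 * (X$2 * Y$3 + X$3 * Y$2)"
  by (simp add: sym_ricci_def ricci_def curv_def gL_def conn1_br1_components br1_components
      field_simps power2_eq_square)

definition ric1 :: "real \<Rightarrow> real \<Rightarrow> real^3 \<Rightarrow> real^3" where
  "ric1 a b X = vector [- (a\<^sup>2 + b\<^sup>2) * X$1 + a * b * X$2 - a * b / 2 * X$3,
                        a * b * X$1 - (a\<^sup>2 + b\<^sup>2) * X$2 + a\<^sup>2 / 2 * X$3,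
                        a * b / 2 * X$1 - a\<^sup>2 / 2 * X$2]"

lemma ric1_components:
  "ric1 a b X $ 1 = - (a\<^sup>2 + b\<^sup>2) * X$1 + a * b * X$2 - a * b / 2 * X$3"
  "ric1 a b X $ 2 = a * b * X$1 - (a\<^sup>2 + b\<^sup>2) * X$2 + a\<^sup>2 / 2 * X$3"
  "ric1 a b X $ 3 = a * b / 2 * X$1 - a\<^sup>2 / 2 * X$2"
  by (simp_all add: ric1_def)

lemma gL_nondegenerate: "(\<forall>Y. gL R Y = gL R' Y) \<longleftrightarrow> R = R'"
proof
  assume "\<forall>Y. gL R Y = gL R' Y"
  then have "gL R e1 = gL R' e1" "gL R e2 = gL R' e2" "gL R e3 = gL R' e3"
    by blast+
  then show "R = R'"
    by (simp add: gL_basis vec_eq_iff forall_3)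
qed simp

lemma ricci_op_eqI:
  assumes "\<And>Y. gL R Y = sym_ricci br nab X Y"
  shows "ricci_op br nab X = R"
  unfolding ricci_op_def
proof (rule the_equality)
  show "\<forall>Y. gL R Y = sym_ricci br nab X Y"
    using assms by blast
next
  fix R' assume "\<forall>Y. gL R' Y = sym_ricci br nab X Y"
  then show "R' = R"
    using assms gL_nondegenerate by metis
qed

lemma ricci_op_conn1_br1: "ricci_op (br1 a b) (conn1 (br1 a b)) = ric1 a b"
  by (rule ext, rule ricci_op_eqI)
    (simp add: sym_ricci_conn1_br1 gL_def ric1_components field_simps power2_eq_square)

lemma scal_conn1_br1: "scal (br1 a b) (conn1 (br1 a b)) = - 2 * (a\<^sup>2 + b\<^sup>2)"
  by (simp add: scal_def sym_ricci_conn1_br1)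

lemma alg_schouten_soliton_iff_derivation:
  "alg_schouten_soliton br nab lam0 c \<longleftrightarrow>
     is_derivation br (\<lambda>X. ricci_op br nab X - (scal br nab * lam0 + c) *\<^sub>R X)"
proof -
  have "(\<forall>X. ricci_op br nab X = (scal br nab * lam0 + c) *\<^sub>R X + D X) \<longleftrightarrow>
          D = (\<lambda>X. ricci_op br nab X - (scal br nab * lam0 + c) *\<^sub>R X)" for D
    by (auto simp: algebra_simps)
  then show ?thesis
    unfolding alg_schouten_soliton_def by auto
qed

lemma derivation_ric1_shift_iff:
  assumes "a \<noteq> 0"
  shows "is_derivation (br1 a b) (\<lambda>X. ric1 a b X - k *\<^sub>R X) \<longleftrightarrow> b = 0 \<and> k = - a\<^sup>2 / 2"
proof
  assume derivation: "is_derivation (br1 a b) (\<lambda>X. ric1 a b X - k *\<^sub>R X)"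
  define D where "D X = ric1 a b X - k *\<^sub>R X" for X
  have "D (br1 a b e1 e2) = br1 a b (D e1) e2 + br1 a b e1 (D e2)"
    using derivation unfolding is_derivation_def D_def by blast
  then have "D (br1 a b e1 e2) $ 1 = (br1 a b (D e1) e2 + br1 a b e1 (D e2)) $ 1"
            "D (br1 a b e1 e2) $ 2 = (br1 a b (D e1) e2 + br1 a b e1 (D e2)) $ 2"
    by simp_all
  then have "a * (k + 2 * b\<^sup>2 + a\<^sup>2 / 2) = 0" "a\<^sup>2 * b / 2 = 0"
    unfolding D_def
    by (simp_all add: br1_components ric1_components field_simps power2_eq_square)
  with assms show "b = 0 \<and> k = - a\<^sup>2 / 2"
    by simp
next
  assume "b = 0 \<and> k = - a\<^sup>2 / 2"
  then have "b = 0" "k = - a\<^sup>2 / 2"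
    by simp_all
  have "linear (\<lambda>X. ric1 a b X - k *\<^sub>R X)"
    by (rule linearI) (simp_all add: vec_eq_iff forall_3 ric1_components algebra_simps)
  moreover have "\<forall>X Y. ric1 a b (br1 a b X Y) - k *\<^sub>R br1 a b X Y =
      br1 a b (ric1 a b X - k *\<^sub>R X) Y + br1 a b X (ric1 a b Y - k *\<^sub>R Y)"
    unfolding \<open>b = 0\<close> \<open>k = - a\<^sup>2 / 2\<close>
    by (simp add: vec_eq_iff forall_3 ric1_components br1_components field_simps power2_eq_square)
  ultimately show "is_derivation (br1 a b) (\<lambda>X. ric1 a b X - k *\<^sub>R X)"
    unfolding is_derivation_def by blast
qed

theorem theorem4p3:
  fixes \<alpha> \<beta> lambda0 c :: real
  assumes "\<alpha> \<noteq> 0"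
  shows "alg_schouten_soliton (br1 \<alpha> \<beta>) (conn1 (br1 \<alpha> \<beta>)) lambda0 c
     \<longleftrightarrow> \<beta> = 0 \<and> c = - (1/2) * \<alpha>^2 + 2 * \<alpha>^2 * lambda0"
proof -
  have "alg_schouten_soliton (br1 \<alpha> \<beta>) (conn1 (br1 \<alpha> \<beta>)) lambda0 c \<longleftrightarrow>
        \<beta> = 0 \<and> - 2 * (\<alpha>\<^sup>2 + \<beta>\<^sup>2) * lambda0 + c = - \<alpha>\<^sup>2 / 2"
    using derivation_ric1_shift_iff[OF assms]
    by (simp add: alg_schouten_soliton_iff_derivation ricci_op_conn1_br1 scal_conn1_br1)
  then show ?thesis
    by auto
qed

end
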